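(* Let $K$ be a field with $\operatorname{char}(K)\neq2$, and let $(C_1,C_0,s,t,e,k)$ be a categorical Lie $K$-algebra (so $C_1,C_0$ are Lie $K$-algebras) and $\tau\colon C_0\times C_0\to C_1$ a $K$-bilinear map. Define $\tau^-\colon C_0\times C_0\to C_1$ by $\tau^-_{a,b}=-\tau_{b,a}$. Then $(C_1,C_0,s,t,e,k,\tau)$ is a braided categorical Lie $K$-algebra if and only if $(C_1,C_0,s,t,e,k,(\tau,\tau^-))$ is a braided categorical Leibniz $K$-algebra.
   Context: A Leibniz $K$-algebra: bilinear bracket with $[x,[y,z]]=[[x,y],z]-[[x,z],y]$; a Lie algebra is an antisymmetric one. A categorical Lie (resp. Leibniz) algebra $(C_1,C_0,s,t,e,k)$ is an internal category in Lie (resp. Leibniz) algebras: homomorphisms $s,t\colon C_1\to C_0$, $e\colon C_0\to C_1$, $k\colon\{(x,y)\in C_1\times C_1:t(x)=s(y)\}\to C_1$ with $se=te=\mathrm{Id}$, $sk(x,y)=s(x)$, $tk(x,y)=t(y)$, $k(es(x),x)=x=k(x,et(x))$, $k$ associative ($k(x,y)$ is the composite "$x$ then $y$"). A braiding on a categorical Lie algebra is a bilinear $\tau\colon C_0\times C_0\to C_1$ with, for $a,b,c\in C_0$, $x,y\in C_1$: $s(\tau_{a,b})=[a,b]$, $t(\tau_{a,b})=[b,a]$; $k([x,y],\tau_{t(x),t(y)})=k(\tau_{s(x),s(y)},[y,x])$; $\tau_{[a,b],c}=\tau_{a,[b,c]}-\tau_{b,[a,c]}$; $\tau_{a,[b,c]}=\tau_{[a,b],c}-\tau_{[a,c],b}$.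 A braiding on a categorical Leibniz algebra is a pair of bilinear $\tau,\psi\colon C_0\times C_0\to C_1$ with $s(\tau_{a,b})=s(\psi_{a,b})=[a,b]$, $t(\tau_{a,b})=t(\psi_{a,b})=-[a,b]$; $k([x,y],\tau_{t(x),t(y)})=k(\tau_{s(x),s(y)},-[x,y])$ and likewise for $\psi$; $\tau_{a,[b,c]}=\tau_{[a,b],c}-\tau_{[a,c],b}$; $\psi_{a,[b,c]}=\tau_{[a,b],c}-\psi_{[a,c],b}$; $\tau_{a,[b,c]}=\tau_{[a,b],c}-\psi_{[a,c],b}$; $\psi_{a,[b,c]}=\psi_{[a,b],c}-\psi_{[a,c],b}$. *)

theory Defs
  imports Main "HOL.Vector_Spaces"
begin

definition bilinear_map ::
  "('k::field \<Rightarrow> 'a::ab_group_add \<Rightarrow> 'a) \<Rightarrow> ('k \<Rightarrow> 'b::ab_group_add \<Rightarrow> 'b)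
   \<Rightarrow> ('k \<Rightarrow> 'c::ab_group_add \<Rightarrow> 'c) \<Rightarrow> ('a \<Rightarrow> 'b \<Rightarrow> 'c) \<Rightarrow> bool" where
  "bilinear_map sa sb sc f \<longleftrightarrow>
     (\<forall>x x' y. f (x + x') y = f x y + f x' y) \<and>
     (\<forall>x y y'. f x (y + y') = f x y + f x y') \<and>
     (\<forall>c x y. f (sa c x) y = sc c (f x y)) \<and>
     (\<forall>c x y. f x (sb c y) = sc c (f x y))"

definition leibniz_algebra :: "('k::field \<Rightarrow> 'a::ab_group_add \<Rightarrow> 'a) \<Rightarrow> ('a \<Rightarrow> 'a \<Rightarrow> 'a) \<Rightarrow> bool" where
  "leibniz_algebra sc br \<longleftrightarrow> Vector_Spaces.vector_space sc \<and> bilinear_map sc sc sc br \<and>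
     (\<forall>x y z. br x (br y z) = br (br x y) z - br (br x z) y)"

definition lie_algebra :: "('k::field \<Rightarrow> 'a::ab_group_add \<Rightarrow> 'a) \<Rightarrow> ('a \<Rightarrow> 'a \<Rightarrow> 'a) \<Rightarrow> bool" where
  "lie_algebra sc br \<longleftrightarrow> leibniz_algebra sc br \<and> (\<forall>x y. br x y = - br y x)"

definition alg_hom ::
  "('k::field \<Rightarrow> 'a::ab_group_add \<Rightarrow> 'a) \<Rightarrow> ('a \<Rightarrow> 'a \<Rightarrow> 'a)
   \<Rightarrow> ('k \<Rightarrow> 'b::ab_group_add \<Rightarrow> 'b) \<Rightarrow> ('b \<Rightarrow> 'b \<Rightarrow> 'b) \<Rightarrow> ('a \<Rightarrow> 'b) \<Rightarrow> bool" where
  "alg_hom sa bra sb brb f \<longleftrightarrow> Vector_Spaces.linear sa sb f \<and> (\<forall>x y. f (bra x y) = brb (f x) (f y))"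

text \<open>The composition k is only meaningful on
 the pullback {(x,y). t x = s y}; it is represented by a total function and all conditions on k
 are imposed only on composable pairs. k x y is the composite "x then y".\<close>
definition cat_axioms ::
  "('k::field \<Rightarrow> 'c1::ab_group_add \<Rightarrow> 'c1) \<Rightarrow> ('c1 \<Rightarrow> 'c1 \<Rightarrow> 'c1)
   \<Rightarrow> ('k \<Rightarrow> 'c0::ab_group_add \<Rightarrow> 'c0) \<Rightarrow> ('c0 \<Rightarrow> 'c0 \<Rightarrow> 'c0)
   \<Rightarrow> ('c1 \<Rightarrow> 'c0) \<Rightarrow> ('c1 \<Rightarrow> 'c0) \<Rightarrow> ('c0 \<Rightarrow> 'c1) \<Rightarrow> ('c1 \<Rightarrow> 'c1 \<Rightarrow> 'c1) \<Rightarrow> bool" where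
  "cat_axioms sc1 br1 sc0 br0 s t e k \<longleftrightarrow>
     alg_hom sc1 br1 sc0 br0 s \<and> alg_hom sc1 br1 sc0 br0 t \<and> alg_hom sc0 br0 sc1 br1 e \<and>
     \<comment> \<open>k is a homomorphism on the pullback algebra\<close>
     (\<forall>x y x' y'. t x = s y \<longrightarrow> t x' = s y' \<longrightarrow> k (x + x') (y + y') = k x y + k x' y') \<and>
     (\<forall>c x y. t x = s y \<longrightarrow> k (sc1 c x) (sc1 c y) = sc1 c (k x y)) \<and>
     (\<forall>x y x' y'. t x = s y \<longrightarrow> t x' = s y' \<longrightarrow> k (br1 x x') (br1 y y') = br1 (k x y) (k x' y')) \<and>
     (\<forall>a. s (e a) = a) \<and> (\<forall>a. t (e a) = a) \<and>
     (\<forall>x y. t x = s y \<longrightarrow> s (k x y) = s x) \<and>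
     (\<forall>x y. t x = s y \<longrightarrow> t (k x y) = t y) \<and>
     (\<forall>x. k (e (s x)) x = x) \<and> (\<forall>x. k x (e (t x)) = x) \<and>
     (\<forall>x y z. t x = s y \<longrightarrow> t y = s z \<longrightarrow> k (k x y) z = k x (k y z))"

definition cat_lie_algebra where
  "cat_lie_algebra sc1 br1 sc0 br0 s t e k \<longleftrightarrow>
     lie_algebra sc1 br1 \<and> lie_algebra sc0 br0 \<and> cat_axioms sc1 br1 sc0 br0 s t e k"

definition cat_leibniz_algebra where
  "cat_leibniz_algebra sc1 br1 sc0 br0 s t e k \<longleftrightarrow>
     leibniz_algebra sc1 br1 \<and> leibniz_algebra sc0 br0 \<and> cat_axioms sc1 br1 sc0 br0 s t e k"

definition braided_cat_lie_algebra where
  "braided_cat_lie_algebra sc1 br1 sc0 br0 s t e k \<tau> \<longleftrightarrow>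
     cat_lie_algebra sc1 br1 sc0 br0 s t e k \<and> bilinear_map sc0 sc0 sc1 \<tau> \<and>
     (\<forall>a b. s (\<tau> a b) = br0 a b) \<and> (\<forall>a b. t (\<tau> a b) = br0 b a) \<and>
     (\<forall>x y. k (br1 x y) (\<tau> (t x) (t y)) = k (\<tau> (s x) (s y)) (br1 y x)) \<and>
     (\<forall>a b c. \<tau> (br0 a b) c = \<tau> a (br0 b c) - \<tau> b (br0 a c)) \<and>
     (\<forall>a b c. \<tau> a (br0 b c) = \<tau> (br0 a b) c - \<tau> (br0 a c) b)"

definition braided_cat_leibniz_algebra where
  "braided_cat_leibniz_algebra sc1 br1 sc0 br0 s t e k \<tau> \<psi> \<longleftrightarrow>
     cat_leibniz_algebra sc1 br1 sc0 br0 s t e k \<and>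
     bilinear_map sc0 sc0 sc1 \<tau> \<and> bilinear_map sc0 sc0 sc1 \<psi> \<and>
     (\<forall>a b. s (\<tau> a b) = br0 a b) \<and> (\<forall>a b. s (\<psi> a b) = br0 a b) \<and>
     (\<forall>a b. t (\<tau> a b) = - br0 a b) \<and> (\<forall>a b. t (\<psi> a b) = - br0 a b) \<and>
     (\<forall>x y. k (br1 x y) (\<tau> (t x) (t y)) = k (\<tau> (s x) (s y)) (- br1 x y)) \<and>
     (\<forall>x y. k (br1 x y) (\<psi> (t x) (t y)) = k (\<psi> (s x) (s y)) (- br1 x y)) \<and>
     (\<forall>a b c. \<tau> a (br0 b c) = \<tau> (br0 a b) c - \<tau> (br0 a c) b) \<and>
     (\<forall>a b c. \<psi> a (br0 b c) = \<tau> (br0 a b) c - \<psi> (br0 a c) b) \<and>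
     (\<forall>a b c. \<tau> a (br0 b c) = \<tau> (br0 a b) c - \<psi> (br0 a c) b) \<and>
     (\<forall>a b c. \<psi> a (br0 b c) = \<psi> (br0 a b) c - \<psi> (br0 a c) b)"

end

theory Submission
  imports Defs
begin

(* In a Lie algebra the two Jacobi-type axioms of a braiding together force
   tau([a,c], b) = - tau(b, [a,c]). With this antisymmetry on brackets and the antisymmetry of
   both brackets, each Leibniz braiding axiom for the pair (tau, tau^-) is a rewriting of a Lie
   braiding axiom, and conversely. For the compatibility with composition one uses that k,
   being additive on composable pairs, commutes with negation. *)

lemma alg_hom_uminus: "alg_hom sa bra sb brb f \<Longrightarrow> f (- x) = - f x"
  unfolding alg_hom_def by (metis module_hom.neg module_hom_iff_linear)

lemma alg_hom_zero: "alg_hom sa bra sb brb f \<Longrightarrow> f 0 = 0"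
  unfolding alg_hom_def by (metis module_hom.zero module_hom_iff_linear)

lemma alg_hom_bracket: "alg_hom sa bra sb brb f \<Longrightarrow> f (bra x y) = brb (f x) (f y)"
  unfolding alg_hom_def by blast

lemma bilinear_map_swap_uminus:
  assumes "Vector_Spaces.vector_space sc" and "bilinear_map sa sb sc f"
  shows "bilinear_map sb sa sc (\<lambda>a b. - f b a)"
proof -
  have "sc c (- x) = - sc c x" for c x
    using assms(1) by (metis module.scale_minus_right module_iff_vector_space)
  then show ?thesis using assms(2) by (auto simp: bilinear_map_def)
qed

lemma cat_axioms_comp_uminus:
  assumes cat: "cat_axioms sc1 br1 sc0 br0 s t e k" and "t x = s y"
  shows "k (- x) (- y) = - k x y"
proof -
  have hs: "alg_hom sc1 br1 sc0 br0 s" and ht: "alg_hom sc1 br1 sc0 br0 t"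
    and add: "\<And>x y x' y'. t x = s y \<Longrightarrow> t x' = s y' \<Longrightarrow> k (x + x') (y + y') = k x y + k x' y'"
    using cat by (auto simp: cat_axioms_def)
  have "t (- x) = s (- y)"
    using \<open>t x = s y\<close> alg_hom_uminus[OF hs] alg_hom_uminus[OF ht] by simp
  then have "k 0 0 = k x y + k (- x) (- y)"
    using add[OF \<open>t x = s y\<close> \<open>t (- x) = s (- y)\<close>] by simp
  moreover have "k 0 0 = 0"
    using add[of 0 0 0 0] alg_hom_zero[OF hs] alg_hom_zero[OF ht] by simp
  ultimately show ?thesis by (simp add: eq_neg_iff_add_eq_0 add.commute)
qed

lemma braiding_antisym_on_brackets:
  fixes \<tau> :: "'a \<Rightarrow> 'a \<Rightarrow> 'b::ab_group_add"
  assumes "\<tau> (br a b) c = \<tau> a (br b c) - \<tau> b (br a c)"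
    and "\<tau> a (br b c) = \<tau> (br a b) c - \<tau> (br a c) b"
  shows "\<tau> (br a c) b = - \<tau> b (br a c)"
proof -
  have "\<tau> (br a b) c = \<tau> (br a b) c - \<tau> (br a c) b - \<tau> b (br a c)"
    using assms by simp
  then have "\<tau> (br a c) b + \<tau> b (br a c) = 0"
    by (simp add: algebra_simps)
  then show ?thesis by (simp add: eq_neg_iff_add_eq_0)
qed

lemma braided_cat_lie_imp_leibniz:
  assumes B: "braided_cat_lie_algebra sc1 br1 sc0 br0 s t e k \<tau>"
  shows "braided_cat_leibniz_algebra sc1 br1 sc0 br0 s t e k \<tau> (\<lambda>a b. - \<tau> b a)"
proof -
  have lie1: "lie_algebra sc1 br1" and lie0: "lie_algebra sc0 br0"
    and cat: "cat_axioms sc1 br1 sc0 br0 s t e k" and bil: "bilinear_map sc0 sc0 sc1 \<tau>"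
    and s\<tau>: "\<And>a b. s (\<tau> a b) = br0 a b" and t\<tau>: "\<And>a b. t (\<tau> a b) = br0 b a"
    and comp: "\<And>x y. k (br1 x y) (\<tau> (t x) (t y)) = k (\<tau> (s x) (s y)) (br1 y x)"
    and hex1: "\<And>a b c. \<tau> (br0 a b) c = \<tau> a (br0 b c) - \<tau> b (br0 a c)"
    and hex2: "\<And>a b c. \<tau> a (br0 b c) = \<tau> (br0 a b) c - \<tau> (br0 a c) b"
    using B unfolding braided_cat_lie_algebra_def cat_lie_algebra_def by blast+
  have anti1: "\<And>x y. br1 x y = - br1 y x" and anti0: "\<And>a b. br0 a b = - br0 b a"
    using lie1 lie0 unfolding lie_algebra_def by blast+
  have hs: "alg_hom sc1 br1 sc0 br0 s" and ht: "alg_hom sc1 br1 sc0 br0 t"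
    using cat by (auto simp: cat_axioms_def)
  note s_neg = alg_hom_uminus[OF hs] and t_neg = alg_hom_uminus[OF ht]
  have anti\<tau>: "\<tau> (br0 a b) c = - \<tau> c (br0 a b)" for a b c
    using braiding_antisym_on_brackets[of \<tau> br0, OF hex1 hex2] .
  have comp_neg: "k (br1 x y) (- \<tau> (t y) (t x)) = k (- \<tau> (s y) (s x)) (- br1 x y)" for x y
  proof -
    have "k (br1 x y) (- \<tau> (t y) (t x)) = - k (br1 y x) (\<tau> (t y) (t x))"
      using cat_axioms_comp_uminus[OF cat, of "br1 y x" "\<tau> (t y) (t x)"]
        anti1[of x y] alg_hom_bracket[OF ht] s\<tau> by simp
    also have "\<dots> = - k (\<tau> (s y) (s x)) (br1 x y)" using comp by simp
    also have "\<dots> = k (- \<tau> (s y) (s x)) (- br1 x y)"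
      using cat_axioms_comp_uminus[OF cat, of "\<tau> (s y) (s x)" "br1 x y"]
        alg_hom_bracket[OF hs] t\<tau> by simp
    finally show ?thesis .
  qed
  have "cat_leibniz_algebra sc1 br1 sc0 br0 s t e k"
    using lie1 lie0 cat unfolding cat_leibniz_algebra_def lie_algebra_def by blast
  moreover have "bilinear_map sc0 sc0 sc1 (\<lambda>a b. - \<tau> b a)"
    using bilinear_map_swap_uminus bil lie1 unfolding lie_algebra_def leibniz_algebra_def by blast
  moreover have "t (\<tau> a b) = - br0 a b" for a b using t\<tau> anti0[of b a] by simp
  moreover have "s (- \<tau> b a) = br0 a b" for a b using s\<tau> s_neg anti0[of a b] by simp
  moreover have "t (- \<tau> b a) = - br0 a b" for a b using t\<tau> t_neg by simp
  moreover have "k (br1 x y) (\<tau> (t x) (t y)) = k (\<tau> (s x) (s y)) (- br1 x y)" for x y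
    using comp anti1[of y x] by simp
  moreover have "- \<tau> (br0 b c) a = \<tau> (br0 a b) c - - \<tau> b (br0 a c)"
    "\<tau> a (br0 b c) = \<tau> (br0 a b) c - - \<tau> b (br0 a c)"
    "- \<tau> (br0 b c) a = - \<tau> c (br0 a b) - - \<tau> b (br0 a c)" for a b c
    using hex2[of a b c] anti\<tau>[of b c a] anti\<tau>[of a c b] anti\<tau>[of a b c] by simp_all
  ultimately show ?thesis
    using bil s\<tau> comp_neg hex2 unfolding braided_cat_leibniz_algebra_def by blast
qed

lemma braided_cat_leibniz_imp_lie:
  assumes lie: "cat_lie_algebra sc1 br1 sc0 br0 s t e k"
    and B: "braided_cat_leibniz_algebra sc1 br1 sc0 br0 s t e k \<tau> (\<lambda>a b. - \<tau> b a)"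
  shows "braided_cat_lie_algebra sc1 br1 sc0 br0 s t e k \<tau>"
proof -
  have bil: "bilinear_map sc0 sc0 sc1 \<tau>"
    and s\<tau>: "\<And>a b. s (\<tau> a b) = br0 a b" and t\<tau>: "\<And>a b. t (\<tau> a b) = - br0 a b"
    and comp: "\<And>x y. k (br1 x y) (\<tau> (t x) (t y)) = k (\<tau> (s x) (s y)) (- br1 x y)"
    and hex2: "\<And>a b c. \<tau> a (br0 b c) = \<tau> (br0 a b) c - \<tau> (br0 a c) b"
    and hex3: "\<And>a b c. \<tau> a (br0 b c) = \<tau> (br0 a b) c - - \<tau> b (br0 a c)"
    using B unfolding braided_cat_leibniz_algebra_def by meson+
  have anti1: "\<And>x y. br1 x y = - br1 y x" and anti0: "\<And>a b. br0 a b = - br0 b a"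
    using lie unfolding cat_lie_algebra_def lie_algebra_def by blast+
  have "t (\<tau> a b) = br0 b a" for a b using t\<tau> anti0[of b a] by simp
  moreover have "k (br1 x y) (\<tau> (t x) (t y)) = k (\<tau> (s x) (s y)) (br1 y x)" for x y
    using comp anti1[of y x] by simp
  moreover have "\<tau> (br0 a b) c = \<tau> a (br0 b c) - \<tau> b (br0 a c)" for a b c
    using hex3[of a b c] by simp
  ultimately show ?thesis
    using lie bil s\<tau> hex2 unfolding braided_cat_lie_algebra_def by blast
qed

theorem mainTheorem6:
  fixes sc1 :: "'k::field \<Rightarrow> 'c1::ab_group_add \<Rightarrow> 'c1" and br1 :: "'c1 \<Rightarrow> 'c1 \<Rightarrow> 'c1"
    and sc0 :: "'k \<Rightarrow> 'c0::ab_group_add \<Rightarrow> 'c0" and br0 :: "'c0 \<Rightarrow> 'c0 \<Rightarrow> 'c0"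
    and s t :: "'c1 \<Rightarrow> 'c0" and e :: "'c0 \<Rightarrow> 'c1" and k :: "'c1 \<Rightarrow> 'c1 \<Rightarrow> 'c1"
    and \<tau> :: "'c0 \<Rightarrow> 'c0 \<Rightarrow> 'c1"
  assumes "(2::'k) \<noteq> 0"
    and "cat_lie_algebra sc1 br1 sc0 br0 s t e k"
    and "bilinear_map sc0 sc0 sc1 \<tau>"
  shows "braided_cat_lie_algebra sc1 br1 sc0 br0 s t e k \<tau> \<longleftrightarrow>
         braided_cat_leibniz_algebra sc1 br1 sc0 br0 s t e k \<tau> (\<lambda>a b. - \<tau> b a)"
  using braided_cat_lie_imp_leibniz braided_cat_leibniz_imp_lie[OF assms(2)] by blast

end
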